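(* Let $(X,d)$ be a quasi-pseudometric space and $\varphi:X\to\mathbb{R}\cup\{\infty\}$ a proper bounded below function. For $x\in\operatorname{dom}\varphi$ let $S(x)=\{y\in X:\varphi(y)+d(y,x)\le\varphi(x)\}$ and $J(x)=\inf\varphi(S(x))$. Let $x_0\in\operatorname{dom}\varphi$. Then one of the following two situations occurs. 1. There exist $m\in\mathbb{N}_0$ and points $x_1,\dots,x_m$ such that for all $0\le k\le m-1$: $\varphi(x_k)>J(x_k)$, $x_{k+1}\in S(x_k)$ and $\varphi(x_{k+1})<(\varphi(x_k)+J(x_k))/2$; and $\varphi(x_m)=J(x_m)$. In this case, putting $z=x_m$: (i) $S(x_{k+1})\subseteq S(x_k)$ and $\varphi(x_{k+1})<\varphi(x_k)$ for all $0\le k\le m-1$; (ii) $z\in S(x_k)$ and $S(z)\subseteq S(x_k)$ for $0\le k\le m$; (iii) $\varphi(y)=\varphi(z)=J(z)$ for all $y\in S(z)$; (iv) $S(y)\subseteq\overline{\{y\}}$ for all $y\in S(z)$. 2. There exists a sequence $(x_n)_{n\in\mathbb{N}_0}$ (starting at $x_0$) such that for all $n\in\mathbb{N}_0$: $\varphi(x_n)>J(x_n)$, $x_{n+1}\in S(x_n)$ and $\varphi(x_{n+1})<(\varphi(x_n)+J(x_n))/2$. In this case: (i) $S(x_{n+1})\subseteq S(x_n)$ and $\varphi(x_{n+1})<\varphi(x_n)$ for all $n$; (ii) the limits $\alpha:=\lim_n\varphi(x_n)=\lim_n J(x_n)$ exist and are real; (iii) $x_{n+k}\in S(x_n)$ for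 all $n,k\in\mathbb{N}_0$; (iv) $(x_n)$ is right $K$-Cauchy. If moreover $X$ is sequentially right $K$-complete and $\varphi$ is nearly lower semicontinuous, then $(x_n)$ converges to a point $z\in X$ such that (i) $z\in S(x_n)$ and $S(z)\subseteq S(x_n)$ for all $n\in\mathbb{N}_0$; (ii) $\varphi(y)=\varphi(z)=J(z)=\alpha$ for all $y\in S(z)$; (iii) $S(y)\subseteq\overline{\{y\}}$ for all $y\in S(z)$.
   Context: A quasi-pseudometric on $X$ is $d:X\times X\to[0,\infty)$ with $d(x,x)=0$ and $d(x,z)\le d(x,y)+d(y,z)$ (no symmetry). Topology $\tau_d$: neighbourhood base at $x$ given by $\{y:d(x,y)<r\}$, $r>0$; so $x_n\to x$ iff $d(x,x_n)\to0$, and $\overline{\{y\}}=\{x: d(x,y)=0\}$. A sequence $(x_n)$ is right $K$-Cauchy if for every $\varepsilon>0$ there is $n_\varepsilon$ with $d(x_{n+k},x_n)<\varepsilon$ for all $n\ge n_\varepsilon$, $k\in\mathbb{N}$; $X$ is sequentially right $K$-complete if every right $K$-Cauchy sequence converges (in $\tau_d$). $\varphi$ is proper if $\operatorname{dom}\varphi=\{x:\varphi(x)<\infty\}\ne\emptyset$. $\varphi$ is nearly lower semicontinuous if $\varphi(x)\le\liminf_n\varphi(x_n)$ for every sequence with pairwise distinct terms converging to $x$. $\mathbb{N}_0=\{0,1,2,\dots\}$. *)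

theory Defs
  imports "HOL-Analysis.Analysis"
begin

definition quasi_pseudometric :: "('a \<Rightarrow> 'a \<Rightarrow> real) \<Rightarrow> bool" where
  "quasi_pseudometric d \<longleftrightarrow>
     (\<forall>x y. 0 \<le> d x y) \<and> (\<forall>x. d x x = 0) \<and> (\<forall>x y z. d x z \<le> d x y + d y z)"

definition qconverges :: "('a \<Rightarrow> 'a \<Rightarrow> real) \<Rightarrow> (nat \<Rightarrow> 'a) \<Rightarrow> 'a \<Rightarrow> bool" where
  "qconverges d xs x \<longleftrightarrow> ((\<lambda>n. d x (xs n)) \<longlonglongrightarrow> 0)"

definition qclosure_pt :: "('a \<Rightarrow> 'a \<Rightarrow> real) \<Rightarrow> 'a \<Rightarrow> 'a set" where
  "qclosure_pt d y = {x. d x y = 0}"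

definition right_K_Cauchy :: "('a \<Rightarrow> 'a \<Rightarrow> real) \<Rightarrow> (nat \<Rightarrow> 'a) \<Rightarrow> bool" where
  "right_K_Cauchy d xs \<longleftrightarrow>
     (\<forall>\<epsilon>>0. \<exists>N. \<forall>n\<ge>N. \<forall>k. d (xs (n + k)) (xs n) < \<epsilon>)"

definition seq_right_K_complete :: "('a \<Rightarrow> 'a \<Rightarrow> real) \<Rightarrow> bool" where
  "seq_right_K_complete d \<longleftrightarrow> (\<forall>xs. right_K_Cauchy d xs \<longrightarrow> (\<exists>x. qconverges d xs x))"

definition proper_fun :: "('a \<Rightarrow> ereal) \<Rightarrow> bool" where
  "proper_fun \<phi> \<longleftrightarrow> {x. \<phi> x < \<infinity>} \<noteq> {}"

definition bounded_below_fun :: "('a \<Rightarrow> ereal) \<Rightarrow> bool" where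
  "bounded_below_fun \<phi> \<longleftrightarrow> (\<exists>c::real. \<forall>x. ereal c \<le> \<phi> x)"

definition nearly_lsc :: "('a \<Rightarrow> 'a \<Rightarrow> real) \<Rightarrow> ('a \<Rightarrow> ereal) \<Rightarrow> bool" where
  "nearly_lsc d \<phi> \<longleftrightarrow>
     (\<forall>xs x. inj xs \<and> qconverges d xs x \<longrightarrow> \<phi> x \<le> liminf (\<lambda>n. \<phi> (xs n)))"

definition Sset :: "('a \<Rightarrow> 'a \<Rightarrow> real) \<Rightarrow> ('a \<Rightarrow> ereal) \<Rightarrow> 'a \<Rightarrow> 'a set" where
  "Sset d \<phi> x = {y. \<phi> y + ereal (d y x) \<le> \<phi> x}"

definition Jval :: "('a \<Rightarrow> 'a \<Rightarrow> real) \<Rightarrow> ('a \<Rightarrow> ereal) \<Rightarrow> 'a \<Rightarrow> ereal" where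
  "Jval d \<phi> x = Inf (\<phi> ` Sset d \<phi> x)"

end

theory Submission
  imports Defs
begin

(* From x_n jump to a point of S(x_n) whose value lies below the midpoint of phi(x_n) and J(x_n);
   if phi(x_n) = J(x_n) no such point is needed and the construction stops. The sets S(x_n) are
   nested, so J(x_n) increases while phi(x_n) decreases, and 2 phi(x_{n+1}) - phi(x_n) < J(x_n)
   squeezes both to a common limit alpha. Since d(x_{n+k}, x_n) <= phi(x_n) - phi(x_{n+k}), the
   sequence is right K-Cauchy. A limit z has phi(z) <= alpha by near lower semicontinuity, and the
   triangle inequality then puts z into every S(x_n); hence phi is constantly alpha on S(z).
   Finally, phi constant on S(z) forces d(w, y) = 0 whenever w is in S(y) and y in S(z). *)

definition descent_step :: "('a \<Rightarrow> 'a \<Rightarrow> real) \<Rightarrow> ('a \<Rightarrow> ereal) \<Rightarrow> 'a \<Rightarrow> 'a \<Rightarrow> bool" where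
  "descent_step d \<phi> x y \<longleftrightarrow>
     Jval d \<phi> x < \<phi> x \<and> y \<in> Sset d \<phi> x \<and> \<phi> y < (\<phi> x + Jval d \<phi> x) / 2"

lemma midpoint_descent_limits:
  fixes f g :: "nat \<Rightarrow> real"
  assumes le: "\<And>n. g n \<le> f n" and mid: "\<And>n. f (Suc n) < (f n + g n) / 2"
    and bound: "\<And>n. c \<le> g n"
  obtains \<alpha> where "f \<longlonglongrightarrow> \<alpha>" "g \<longlonglongrightarrow> \<alpha>" "\<And>n. \<alpha> \<le> f n"
proof -
  have "decseq f"
  proof (rule decseq_SucI)
    show "f (Suc n) \<le> f n" for n
      using le[of n] mid[of n] by (simp add: field_simps)
  qed
  moreover have "\<forall>n. c \<le> f n" using le bound order_trans by blast
  ultimately obtain \<alpha> where f: "f \<longlonglongrightarrow> \<alpha>" and f_ge: "\<forall>n. \<alpha> \<le> f n"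
    by (rule decseq_convergent)
  have "g \<longlonglongrightarrow> \<alpha>"
  proof (rule tendsto_sandwich[of "\<lambda>n. 2 * f (Suc n) - f n" _ _ f])
    have "2 * f (Suc n) < f n + g n" for n
      using mid[of n] by (simp add: field_simps)
    then show "\<forall>\<^sub>F n in sequentially. 2 * f (Suc n) - f n \<le> g n"
      by (intro always_eventually allI) (smt (verit))
    show "\<forall>\<^sub>F n in sequentially. g n \<le> f n"
      using le by (intro always_eventually allI)
    have "(\<lambda>n. 2 * f (Suc n) - f n) \<longlonglongrightarrow> 2 * \<alpha> - \<alpha>"
      by (intro tendsto_intros LIMSEQ_Suc f)
    then show "(\<lambda>n. 2 * f (Suc n) - f n) \<longlonglongrightarrow> \<alpha>"
      by simp
  qed (rule f)
  with f f_ge that show thesis by blast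
qed

lemma right_K_CauchyI_potential:
  fixes f :: "nat \<Rightarrow> real"
  assumes dominated: "\<And>n k. f (n + k) + d (x (n + k)) (x n) \<le> f n"
    and f: "f \<longlonglongrightarrow> \<alpha>" and f_ge: "\<And>n. \<alpha> \<le> f n"
  shows "right_K_Cauchy d x"
  unfolding right_K_Cauchy_def
proof (intro allI impI)
  fix \<epsilon> :: real assume "0 < \<epsilon>"
  then obtain N where N: "\<And>n. n \<ge> N \<Longrightarrow> f n < \<alpha> + \<epsilon>"
    using order_tendstoD(2)[OF f, of "\<alpha> + \<epsilon>"] by (auto simp: eventually_sequentially)
  have "d (x (n + k)) (x n) < \<epsilon>" if "n \<ge> N" for n k
    using N[OF that] dominated[of n k] f_ge[of "n + k"] by linarith
  then show "\<exists>N. \<forall>n\<ge>N. \<forall>k. d (x (n + k)) (x n) < \<epsilon>" by blast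
qed

locale lower_bounded_qpm =
  fixes d :: "'a \<Rightarrow> 'a \<Rightarrow> real" and \<phi> :: "'a \<Rightarrow> ereal" and c :: real
  assumes qpm: "quasi_pseudometric d" and lower_bound: "\<And>x. ereal c \<le> \<phi> x"
begin

lemma d_nonneg: "0 \<le> d x y"
  using qpm by (simp add: quasi_pseudometric_def)

lemma d_self: "d x x = 0"
  using qpm by (simp add: quasi_pseudometric_def)

lemma d_triangle: "d x z \<le> d x y + d y z"
  using qpm by (simp add: quasi_pseudometric_def)

lemma phi_eq_ereal: "\<phi> x < \<infinity> \<Longrightarrow> \<phi> x = ereal (real_of_ereal (\<phi> x))"
  using lower_bound[of x] by (cases "\<phi> x") auto

lemma Sset_refl: "x \<in> Sset d \<phi> x"
  by (simp add: Sset_def d_self)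

lemma Sset_le:
  assumes "y \<in> Sset d \<phi> x"
  shows "\<phi> y \<le> \<phi> x"
proof -
  have "\<phi> y = \<phi> y + 0"
    by simp
  also have "\<dots> \<le> \<phi> y + ereal (d y x)"
    using d_nonneg[of y x] by (intro add_left_mono) simp
  also have "\<dots> \<le> \<phi> x"
    using assms by (simp add: Sset_def)
  finally show ?thesis .
qed

lemma Sset_iff_real:
  assumes "\<phi> x = ereal a"
  shows "y \<in> Sset d \<phi> x \<longleftrightarrow> (\<exists>b. \<phi> y = ereal b \<and> b + d y x \<le> a)"
proof
  assume y: "y \<in> Sset d \<phi> x"
  then have "\<phi> y < \<infinity>"
    using Sset_le[OF y] assms by auto
  then have "\<phi> y = ereal (real_of_ereal (\<phi> y))"
    by (rule phi_eq_ereal)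
  then show "\<exists>b. \<phi> y = ereal b \<and> b + d y x \<le> a"
    using y assms by (auto simp: Sset_def) (metis plus_ereal.simps(1) ereal_less_eq(3))
qed (use assms in \<open>auto simp: Sset_def\<close>)

lemma Sset_trans:
  assumes y: "y \<in> Sset d \<phi> x" and z: "z \<in> Sset d \<phi> y"
  shows "z \<in> Sset d \<phi> x"
proof -
  have "\<phi> z + ereal (d z x) \<le> \<phi> z + (ereal (d z y) + ereal (d y x))"
    using d_triangle[of z x y] by (intro add_left_mono) simp
  also have "\<dots> = (\<phi> z + ereal (d z y)) + ereal (d y x)"
    by (simp add: add.assoc)
  also have "\<dots> \<le> \<phi> y + ereal (d y x)"
    using z by (intro add_right_mono) (simp add: Sset_def)
  also have "\<dots> \<le> \<phi> x"
    using y by (simp add: Sset_def)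
  finally show ?thesis by (simp add: Sset_def)
qed

lemma Sset_mono: "y \<in> Sset d \<phi> x \<Longrightarrow> Sset d \<phi> y \<subseteq> Sset d \<phi> x"
  using Sset_trans by blast

lemma Sset_chain:
  assumes step: "\<And>i. i < n \<Longrightarrow> x (Suc i) \<in> Sset d \<phi> (x i)" and "k \<le> l" "l \<le> n"
  shows "x l \<in> Sset d \<phi> (x k)"
  using \<open>k \<le> l\<close> \<open>l \<le> n\<close>
proof (induction l rule: dec_induct)
  case base
  show ?case by (rule Sset_refl)
next
  case (step i)
  then have "x i \<in> Sset d \<phi> (x k)" "x (Suc i) \<in> Sset d \<phi> (x i)"
    using assms(1) by simp_all
  then show ?case by (rule Sset_trans)
qed

lemma Jval_le: "y \<in> Sset d \<phi> x \<Longrightarrow> Jval d \<phi> x \<le> \<phi> y"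
  unfolding Jval_def by (rule Inf_lower) (rule imageI)

lemma Jval_le_phi: "Jval d \<phi> x \<le> \<phi> x"
  using Jval_le[OF Sset_refl] .

lemma Jval_lower_bound: "ereal c \<le> Jval d \<phi> x"
  unfolding Jval_def using lower_bound by (auto intro: Inf_greatest)

lemma Jval_eq_ereal:
  assumes "\<phi> x < \<infinity>"
  shows "Jval d \<phi> x = ereal (real_of_ereal (Jval d \<phi> x))"
proof -
  have "Jval d \<phi> x \<noteq> \<infinity>" "Jval d \<phi> x \<noteq> -\<infinity>"
    using le_less_trans[OF Jval_le_phi assms] Jval_lower_bound[of x] by auto
  then show ?thesis by (cases "Jval d \<phi> x") simp_all
qed

lemma Jval_less_midpoint:
  assumes less: "Jval d \<phi> x < \<phi> x"
  shows "Jval d \<phi> x < (\<phi> x + Jval d \<phi> x) / 2" "(\<phi> x + Jval d \<phi> x) / 2 \<le> \<phi> x"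
proof -
  have "Jval d \<phi> x \<noteq> \<infinity>" "Jval d \<phi> x \<noteq> -\<infinity>"
    using less Jval_lower_bound[of x] by auto
  then obtain b where b: "Jval d \<phi> x = ereal b"
    by (cases "Jval d \<phi> x") simp_all
  consider a where "\<phi> x = ereal a" "b < a" | "\<phi> x = \<infinity>"
    using less b by (cases "\<phi> x") simp_all
  then have "Jval d \<phi> x < (\<phi> x + Jval d \<phi> x) / 2 \<and> (\<phi> x + Jval d \<phi> x) / 2 \<le> \<phi> x"
    by cases (simp_all add: b)
  then show "Jval d \<phi> x < (\<phi> x + Jval d \<phi> x) / 2" "(\<phi> x + Jval d \<phi> x) / 2 \<le> \<phi> x"
    by simp_all
qed

lemma descent_step_exists:
  assumes "Jval d \<phi> x < \<phi> x"
  shows "\<exists>y. descent_step d \<phi> x y"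
  using Jval_less_midpoint(1)[OF assms] assms
  unfolding descent_step_def Jval_def by (auto simp: Inf_less_iff)

lemma descent_step_less: "descent_step d \<phi> x y \<Longrightarrow> \<phi> y < \<phi> x"
  unfolding descent_step_def using Jval_less_midpoint(2) by (blast intro: less_le_trans)

lemma inj_if_phi_strictly_decreasing:
  assumes "\<And>n. \<phi> (x (Suc n)) < \<phi> (x n)"
  shows "inj x"
proof -
  have "strict_mono (\<lambda>n. - \<phi> (x n))"
    using assms by (intro strict_monoI_Suc) simp
  then show ?thesis
    by (intro injI) (metis strict_mono_eq)
qed

lemma phi_const_on_Sset: "\<phi> z = Jval d \<phi> z \<Longrightarrow> y \<in> Sset d \<phi> z \<Longrightarrow> \<phi> y = \<phi> z"
  using Jval_le Sset_le by (metis antisym)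

lemma Sset_subset_closure:
  assumes finite: "\<phi> z < \<infinity>" and const: "\<And>y. y \<in> Sset d \<phi> z \<Longrightarrow> \<phi> y = \<phi> z"
    and y: "y \<in> Sset d \<phi> z"
  shows "Sset d \<phi> y \<subseteq> qclosure_pt d y"
proof
  fix w assume w: "w \<in> Sset d \<phi> y"
  define a where "a = real_of_ereal (\<phi> z)"
  have "\<phi> y = ereal a" "\<phi> w = ereal a"
    using const[OF y] const[OF Sset_trans[OF y w]] phi_eq_ereal[OF finite] by (simp_all add: a_def)
  then have "a + d w y \<le> a" using Sset_iff_real w by auto
  then show "w \<in> qclosure_pt d y" using d_nonneg[of w y] by (simp add: qclosure_pt_def)
qed

lemma descent_sequence_exists:
  "(\<exists>m x. x 0 = x0 \<and> (\<forall>k<m. descent_step d \<phi> (x k) (x (Suc k))) \<and> \<phi> (x m) = Jval d \<phi> (x m))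
   \<or> (\<exists>x. x 0 = x0 \<and> (\<forall>n. descent_step d \<phi> (x n) (x (Suc n))))"
proof -
  obtain next_pt where next_pt: "\<And>x. Jval d \<phi> x < \<phi> x \<Longrightarrow> descent_step d \<phi> x (next_pt x)"
    using descent_step_exists by metis
  define s where "s n = (next_pt ^^ n) x0" for n
  have s0: "s 0 = x0" and step: "\<And>n. \<phi> (s n) \<noteq> Jval d \<phi> (s n) \<Longrightarrow> descent_step d \<phi> (s n) (s (Suc n))"
    using next_pt Jval_le_phi by (simp_all add: s_def order_neq_le_trans)
  show ?thesis
  proof (cases "\<exists>m. \<phi> (s m) = Jval d \<phi> (s m)")
    case True
    define m where "m = (LEAST m. \<phi> (s m) = Jval d \<phi> (s m))"
    have "\<phi> (s m) = Jval d \<phi> (s m)"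
      unfolding m_def using True by (rule LeastI_ex)
    moreover have "\<forall>k<m. descent_step d \<phi> (s k) (s (Suc k))"
      using step not_less_Least unfolding m_def by blast
    ultimately show ?thesis using s0 by blast
  next
    case False
    then show ?thesis using s0 step by blast
  qed
qed

lemma finite_descent:
  assumes steps: "\<forall>k<m. descent_step d \<phi> (x k) (x (Suc k))"
    and stop: "\<phi> (x m) = Jval d \<phi> (x m)" and finite: "\<phi> (x 0) < \<infinity>"
  shows "(\<forall>k<m. Sset d \<phi> (x (Suc k)) \<subseteq> Sset d \<phi> (x k) \<and> \<phi> (x (Suc k)) < \<phi> (x k)) \<and>
         (\<forall>k\<le>m. x m \<in> Sset d \<phi> (x k) \<and> Sset d \<phi> (x m) \<subseteq> Sset d \<phi> (x k)) \<and>
         (\<forall>y\<in>Sset d \<phi> (x m). \<phi> y = \<phi> (x m) \<and> \<phi> (x m) = Jval d \<phi> (x m)) \<and>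
         (\<forall>y\<in>Sset d \<phi> (x m). Sset d \<phi> y \<subseteq> qclosure_pt d y)"
proof -
  have chain: "\<And>i. i < m \<Longrightarrow> x (Suc i) \<in> Sset d \<phi> (x i)"
    using steps by (simp add: descent_step_def)
  have in_S: "x m \<in> Sset d \<phi> (x k)" if "k \<le> m" for k
    using Sset_chain[where x = x, OF chain that] by simp
  have "\<phi> (x m) < \<infinity>"
    using le_less_trans[OF Sset_le[OF in_S[OF le0]] finite] .
  moreover have const: "\<And>y. y \<in> Sset d \<phi> (x m) \<Longrightarrow> \<phi> y = \<phi> (x m)"
    using phi_const_on_Sset[OF stop] .
  ultimately have closure: "Sset d \<phi> y \<subseteq> qclosure_pt d y" if "y \<in> Sset d \<phi> (x m)" for y
    using Sset_subset_closure that by blast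
  have less: "\<phi> (x (Suc k)) < \<phi> (x k)" if "k < m" for k
    using descent_step_less steps that by blast
  show ?thesis
  proof (intro conjI allI impI ballI)
    fix k assume "k < m"
    then show "Sset d \<phi> (x (Suc k)) \<subseteq> Sset d \<phi> (x k)" "\<phi> (x (Suc k)) < \<phi> (x k)"
      using Sset_mono[OF chain] less by simp_all
  next
    fix k assume "k \<le> m"
    then show "x m \<in> Sset d \<phi> (x k)" "Sset d \<phi> (x m) \<subseteq> Sset d \<phi> (x k)"
      using in_S Sset_mono[OF in_S] by simp_all
  qed (use const stop closure in simp_all)
qed

lemma descent_values_converge:
  assumes steps: "\<And>n. descent_step d \<phi> (x n) (x (Suc n))" and finite: "\<phi> (x 0) < \<infinity>"
  obtains f \<alpha> where "\<And>n. \<phi> (x n) = ereal (f n)" "f \<longlonglongrightarrow> \<alpha>" "\<And>n. \<alpha> \<le> f n"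
    "(\<lambda>n. Jval d \<phi> (x n)) \<longlonglongrightarrow> ereal \<alpha>"
proof -
  have finite_n: "\<phi> (x n) < \<infinity>" for n
  proof (induction n)
    case (Suc n)
    then show ?case using less_trans[OF descent_step_less[OF steps[of n]]] by blast
  qed (rule finite)
  define f where "f n = real_of_ereal (\<phi> (x n))" for n
  define g where "g n = real_of_ereal (Jval d \<phi> (x n))" for n
  have f: "\<phi> (x n) = ereal (f n)" and g: "Jval d \<phi> (x n) = ereal (g n)" for n
    using phi_eq_ereal[OF finite_n] Jval_eq_ereal[OF finite_n] by (simp_all add: f_def g_def)
  have "g n \<le> f n" "f (Suc n) < (f n + g n) / 2" "c \<le> g n" for n
    using Jval_le_phi[of "x n"] steps[of n] Jval_lower_bound[of "x n"]
    by (simp_all add: f g descent_step_def)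
  then obtain \<alpha> where "f \<longlonglongrightarrow> \<alpha>" "g \<longlonglongrightarrow> \<alpha>" "\<And>n. \<alpha> \<le> f n"
    by (rule midpoint_descent_limits) blast
  with that f g show thesis by simp
qed

lemma limit_in_Sset:
  assumes dominated: "\<And>k. f (n + k) + d (x (n + k)) (x n) \<le> f n"
    and f: "\<phi> (x n) = ereal (f n)" "f \<longlonglongrightarrow> \<alpha>"
    and z: "qconverges d x z" "\<phi> z \<le> ereal \<alpha>"
  shows "z \<in> Sset d \<phi> (x n)"
proof -
  have "(\<lambda>k. d z (x (n + k)) + (f n - f (n + k))) \<longlonglongrightarrow> 0 + (f n - \<alpha>)"
    using LIMSEQ_ignore_initial_segment[OF z(1)[unfolded qconverges_def], of n]
      LIMSEQ_ignore_initial_segment[OF f(2), of n]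
    by (intro tendsto_intros) (simp_all add: add.commute)
  moreover have "d z (x n) \<le> d z (x (n + k)) + (f n - f (n + k))" for k
    using d_triangle[of z "x n" "x (n + k)"] dominated[of k] by linarith
  ultimately have "d z (x n) \<le> f n - \<alpha>"
    using LIMSEQ_le_const by fastforce
  moreover obtain b where b: "\<phi> z = ereal b" "b \<le> \<alpha>"
    using z(2) lower_bound[of z] by (cases "\<phi> z") auto
  ultimately have "b + d z (x n) \<le> f n"
    by linarith
  then show ?thesis
    unfolding Sset_iff_real[OF f(1)] using b(1) by blast
qed

lemma descent_limit_point:
  assumes dominated: "\<And>n k. f (n + k) + d (x (n + k)) (x n) \<le> f n"
    and less: "\<And>n. \<phi> (x (Suc n)) < \<phi> (x n)"
    and f: "\<And>n. \<phi> (x n) = ereal (f n)" "f \<longlonglongrightarrow> \<alpha>"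
    and J: "(\<lambda>n. Jval d \<phi> (x n)) \<longlonglongrightarrow> ereal \<alpha>"
    and z: "qconverges d x z" and lsc: "nearly_lsc d \<phi>"
  shows "(\<forall>n. z \<in> Sset d \<phi> (x n) \<and> Sset d \<phi> z \<subseteq> Sset d \<phi> (x n)) \<and>
         (\<forall>y\<in>Sset d \<phi> z. \<phi> y = \<phi> z \<and> \<phi> z = Jval d \<phi> z \<and> Jval d \<phi> z = ereal \<alpha>) \<and>
         (\<forall>y\<in>Sset d \<phi> z. Sset d \<phi> y \<subseteq> qclosure_pt d y)"
proof -
  have "\<phi> z \<le> liminf (\<lambda>n. \<phi> (x n))"
    using lsc z inj_if_phi_strictly_decreasing[where x = x, OF less] by (auto simp: nearly_lsc_def)
  also have "\<dots> = ereal \<alpha>"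
    using f by (intro lim_imp_Liminf) simp_all
  finally have z_le: "\<phi> z \<le> ereal \<alpha>" .
  have z_in: "z \<in> Sset d \<phi> (x n)" for n
    using limit_in_Sset[OF dominated f(1,2) z z_le] .
  have y_eq: "\<phi> y = ereal \<alpha>" if y: "y \<in> Sset d \<phi> z" for y
  proof (rule antisym)
    show "\<phi> y \<le> ereal \<alpha>" using Sset_le[OF y] z_le by simp
    have "Jval d \<phi> (x n) \<le> \<phi> y" for n
      using Jval_le Sset_mono[OF z_in] y by blast
    then show "ereal \<alpha> \<le> \<phi> y"
      using LIMSEQ_le_const2[OF J] by blast
  qed
  have "Jval d \<phi> z = ereal \<alpha>"
  proof (rule antisym)
    show "Jval d \<phi> z \<le> ereal \<alpha>"
      using Jval_le_phi[of z] y_eq[OF Sset_refl] by simp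
    show "ereal \<alpha> \<le> Jval d \<phi> z"
      unfolding Jval_def using y_eq by (auto intro: Inf_greatest)
  qed
  moreover have "Sset d \<phi> y \<subseteq> qclosure_pt d y" if "y \<in> Sset d \<phi> z" for y
    using Sset_subset_closure[of z y] y_eq[OF Sset_refl] y_eq that by simp
  ultimately show ?thesis
    using z_in Sset_mono[OF z_in] y_eq[OF Sset_refl] y_eq
    by (intro conjI allI ballI) simp_all
qed

lemma infinite_descent:
  assumes steps: "\<forall>n. descent_step d \<phi> (x n) (x (Suc n))" and finite: "\<phi> (x 0) < \<infinity>"
  shows "(\<forall>n. Sset d \<phi> (x (Suc n)) \<subseteq> Sset d \<phi> (x n) \<and> \<phi> (x (Suc n)) < \<phi> (x n)) \<and>
         (\<exists>\<alpha>::real. (\<lambda>n. \<phi> (x n)) \<longlonglongrightarrow> ereal \<alpha> \<and> (\<lambda>n. Jval d \<phi> (x n)) \<longlonglongrightarrow> ereal \<alpha> \<and>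
            (seq_right_K_complete d \<and> nearly_lsc d \<phi> \<longrightarrow>
               (\<exists>z. qconverges d x z \<and>
                  (\<forall>n. z \<in> Sset d \<phi> (x n) \<and> Sset d \<phi> z \<subseteq> Sset d \<phi> (x n)) \<and>
                  (\<forall>y\<in>Sset d \<phi> z. \<phi> y = \<phi> z \<and> \<phi> z = Jval d \<phi> z \<and> Jval d \<phi> z = ereal \<alpha>) \<and>
                  (\<forall>y\<in>Sset d \<phi> z. Sset d \<phi> y \<subseteq> qclosure_pt d y)))) \<and>
         (\<forall>n k. x (n + k) \<in> Sset d \<phi> (x n)) \<and>
         right_K_Cauchy d x"
proof -
  have next_in_S: "x (Suc n) \<in> Sset d \<phi> (x n)" for n
    using steps by (simp add: descent_step_def)
  have chain: "x (n + k) \<in> Sset d \<phi> (x n)" for n k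
    using Sset_chain[where x = x and n = "n + k", OF next_in_S] by simp
  have less: "\<phi> (x (Suc n)) < \<phi> (x n)" for n
    using steps descent_step_less by blast
  obtain f \<alpha> where f: "\<And>n. \<phi> (x n) = ereal (f n)" "f \<longlonglongrightarrow> \<alpha>" "\<And>n. \<alpha> \<le> f n"
    and J: "(\<lambda>n. Jval d \<phi> (x n)) \<longlonglongrightarrow> ereal \<alpha>"
    using descent_values_converge[OF steps[rule_format] finite] by blast
  have dominated: "f (n + k) + d (x (n + k)) (x n) \<le> f n" for n k
    using chain[of n k] Sset_iff_real[OF f(1)] f(1)[of "n + k"] by auto
  then have Cauchy: "right_K_Cauchy d x"
    using right_K_CauchyI_potential f(2,3) by blast
  have limit_point: "\<exists>z. qconverges d x z \<and>
                  (\<forall>n. z \<in> Sset d \<phi> (x n) \<and> Sset d \<phi> z \<subseteq> Sset d \<phi> (x n)) \<and>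
                  (\<forall>y\<in>Sset d \<phi> z. \<phi> y = \<phi> z \<and> \<phi> z = Jval d \<phi> z \<and> Jval d \<phi> z = ereal \<alpha>) \<and>
                  (\<forall>y\<in>Sset d \<phi> z. Sset d \<phi> y \<subseteq> qclosure_pt d y)"
    if complete: "seq_right_K_complete d" and lsc: "nearly_lsc d \<phi>"
  proof -
    obtain z where z: "qconverges d x z"
      using complete Cauchy unfolding seq_right_K_complete_def by blast
    then show ?thesis
      using descent_limit_point[OF dominated less f(1,2) J z lsc] by blast
  qed
  have "(\<lambda>n. \<phi> (x n)) \<longlonglongrightarrow> ereal \<alpha>"
    using f by simp
  then show ?thesis
  proof (intro conjI allI exI[of _ \<alpha>] impI)
    show "Sset d \<phi> (x (Suc n)) \<subseteq> Sset d \<phi> (x n)" for n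
      using Sset_mono[OF next_in_S] .
  qed (use less J limit_point chain Cauchy in blast)+
qed

end

theorem proposition2p14:
  fixes d :: "'a \<Rightarrow> 'a \<Rightarrow> real" and \<phi> :: "'a \<Rightarrow> ereal" and x0 :: 'a
  assumes qpm: "quasi_pseudometric d"
    and proper: "proper_fun \<phi>"
    and bdd: "bounded_below_fun \<phi>"
    and x0: "\<phi> x0 < \<infinity>"
  defines "S \<equiv> Sset d \<phi>" and "J \<equiv> Jval d \<phi>"
  shows
    "((\<exists>m x. x 0 = x0 \<and>
         (\<forall>k<m. \<phi> (x k) > J (x k) \<and> x (Suc k) \<in> S (x k) \<and>
                \<phi> (x (Suc k)) < (\<phi> (x k) + J (x k)) / 2) \<and>
         \<phi> (x m) = J (x m))
      \<or>
      (\<exists>x. x 0 = x0 \<and>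
         (\<forall>n. \<phi> (x n) > J (x n) \<and> x (Suc n) \<in> S (x n) \<and>
              \<phi> (x (Suc n)) < (\<phi> (x n) + J (x n)) / 2)))
    \<and>
    (\<forall>m x. x 0 = x0 \<and>
         (\<forall>k<m. \<phi> (x k) > J (x k) \<and> x (Suc k) \<in> S (x k) \<and>
                \<phi> (x (Suc k)) < (\<phi> (x k) + J (x k)) / 2) \<and>
         \<phi> (x m) = J (x m)
       \<longrightarrow>
         (\<forall>k<m. S (x (Suc k)) \<subseteq> S (x k) \<and> \<phi> (x (Suc k)) < \<phi> (x k)) \<and>
         (\<forall>k\<le>m. x m \<in> S (x k) \<and> S (x m) \<subseteq> S (x k)) \<and>
         (\<forall>y\<in>S (x m). \<phi> y = \<phi> (x m) \<and> \<phi> (x m) = J (x m)) \<and>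
         (\<forall>y\<in>S (x m). S y \<subseteq> qclosure_pt d y))
    \<and>
    (\<forall>x. x 0 = x0 \<and>
         (\<forall>n. \<phi> (x n) > J (x n) \<and> x (Suc n) \<in> S (x n) \<and>
              \<phi> (x (Suc n)) < (\<phi> (x n) + J (x n)) / 2)
       \<longrightarrow>
         (\<forall>n. S (x (Suc n)) \<subseteq> S (x n) \<and> \<phi> (x (Suc n)) < \<phi> (x n)) \<and>
         (\<exists>\<alpha>::real. (\<lambda>n. \<phi> (x n)) \<longlonglongrightarrow> ereal \<alpha> \<and> (\<lambda>n. J (x n)) \<longlonglongrightarrow> ereal \<alpha> \<and>
            (seq_right_K_complete d \<and> nearly_lsc d \<phi> \<longrightarrow>
               (\<exists>z. qconverges d x z \<and>
                  (\<forall>n. z \<in> S (x n) \<and> S z \<subseteq> S (x n)) \<and>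
                  (\<forall>y\<in>S z. \<phi> y = \<phi> z \<and> \<phi> z = J z \<and> J z = ereal \<alpha>) \<and>
                  (\<forall>y\<in>S z. S y \<subseteq> qclosure_pt d y)))) \<and>
         (\<forall>n k. x (n + k) \<in> S (x n)) \<and>
         right_K_Cauchy d x)"
proof -
  obtain c :: real where "\<And>x. ereal c \<le> \<phi> x"
    using bdd by (auto simp: bounded_below_fun_def)
  then interpret lower_bounded_qpm d \<phi> c
    using qpm by unfold_locales
  show ?thesis
    unfolding S_def J_def descent_step_def[symmetric]
  proof (rule conjI[OF descent_sequence_exists conjI]; intro allI impI; elim conjE)
  qed (rule finite_descent infinite_descent; simp add: less_imp_neq[OF x0])+
qed

end
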